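(* Let $A\in\mathbb{R}^{n\times n}$ be symmetric, $g\in\mathbb{R}^n$ nonzero, $\Delta>0$, and let $x_k,\lambda_k,T_k,\beta_k$ be the quantities of the $k$-th step of the GLTR method described in the context. Let $r_k=(A+\lambda_kI)x_k+g$ and let $\kappa_k=\lambda_{\max}(T_k+\lambda_kI)/\lambda_{\min}(T_k+\lambda_kI)$ be the 2-condition number of $T_k+\lambda_kI$. Then $$\|r_k\|\le 2\beta_k\|x_k\|\Big(\frac{\sqrt{\kappa_k}-1}{\sqrt{\kappa_k}+1}\Big)^{k-1}.$$
   Context: All norms are Euclidean. The Lanczos process on $A$ with starting vector $g$ gives $Q_k=[q_1,\ldots,q_k]$ with orthonormal columns spanning $\mathcal{K}_k(A,g)=\mathrm{span}\{g,\ldots,A^{k-1}g\}$, $q_1=g/\|g\|$, symmetric tridiagonal $T_k=Q_k^TAQ_k$ with off-diagonal entries $\beta_1,\ldots,\beta_{k-1}$, and $AQ_k=Q_kT_k+\beta_kq_{k+1}e_k^T$ ($\beta_k$ is the $(k,k+1)$ entry of $T_{k+1}$). The GLTR iterate is $x_k=Q_kh_k$ where $h_k$ is the minimizer of $\frac12h^TT_kh+\|g\|h^Te_1$ over $\|h\|\le\Delta$ with Lagrange multiplier $\lambda_k\ge0$: $(T_k+\lambda_kI)h_k=-\|g\|e_1$, $\lambda_k(\Delta-\|h_k\|)=0$, and $T_k+\lambda_kI$ is positive definite. *)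

theory Defs
  imports "HOL-Analysis.Analysis"
begin

text \<open>Small k x k real matrices are represented as functions nat => nat => real,
  with indices ranging over {1..k}; vectors in R^k as functions nat => real on {1..k}.\<close>

definition is_eigenvalue_k :: "nat \<Rightarrow> (nat \<Rightarrow> nat \<Rightarrow> real) \<Rightarrow> real \<Rightarrow> bool" where
  "is_eigenvalue_k k M \<mu> \<longleftrightarrow>
     (\<exists>v::nat \<Rightarrow> real. (\<exists>i\<in>{1..k}. v i \<noteq> 0) \<and>
        (\<forall>i\<in>{1..k}. (\<Sum>j=1..k. M i j * v j) = \<mu> * v i))"

definition lam_max_k :: "nat \<Rightarrow> (nat \<Rightarrow> nat \<Rightarrow> real) \<Rightarrow> real" where
  "lam_max_k k M = Max {\<mu>. is_eigenvalue_k k M \<mu>}"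

definition lam_min_k :: "nat \<Rightarrow> (nat \<Rightarrow> nat \<Rightarrow> real) \<Rightarrow> real" where
  "lam_min_k k M = Min {\<mu>. is_eigenvalue_k k M \<mu>}"

definition pos_def_k :: "nat \<Rightarrow> (nat \<Rightarrow> nat \<Rightarrow> real) \<Rightarrow> bool" where
  "pos_def_k k M \<longleftrightarrow>
     (\<forall>v::nat \<Rightarrow> real. (\<exists>i\<in>{1..k}. v i \<noteq> 0) \<longrightarrow>
        (\<Sum>i=1..k. \<Sum>j=1..k. v i * M i j * v j) > 0)"

definition norm_k :: "nat \<Rightarrow> (nat \<Rightarrow> real) \<Rightarrow> real" where
  "norm_k k h = sqrt (\<Sum>i=1..k. (h i)\<^sup>2)"

definition krylov :: "real^'n^'n \<Rightarrow> real^'n \<Rightarrow> nat \<Rightarrow> (real^'n) set" where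
  "krylov A g j = span {((\<lambda>v. A *v v) ^^ i) g | i. i < j}"

definition lanczos_T :: "real^'n^'n \<Rightarrow> (nat \<Rightarrow> real^'n) \<Rightarrow> nat \<Rightarrow> nat \<Rightarrow> real" where
  "lanczos_T A q i j = q i \<bullet> (A *v q j)"

definition tr_obj :: "nat \<Rightarrow> (nat \<Rightarrow> nat \<Rightarrow> real) \<Rightarrow> real \<Rightarrow> (nat \<Rightarrow> real) \<Rightarrow> real" where
  "tr_obj k T gn h = (1/2) * (\<Sum>i=1..k. \<Sum>j=1..k. h i * T i j * h j) + gn * h 1"

end

theory Submission
  imports Defs "HOL-Computational_Algebra.Polynomial"
begin

(* The Lanczos relation gives r_k = beta_k (e_k^T h_k) q_(k+1), so only the last coordinate of
   h_k has to be bounded.  Since the q_i span the Krylov spaces and (T_k + lambda_k I) h_k is a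
   multiple of e_1, the vectors (T_k + lambda_k I)^i h_k with 0 < i < k are orthogonal to e_k.
   Hence e_k^T h_k = e_k^T p(T_k + lambda_k I) h_k for every polynomial p of degree < k with
   p(0) = 1, and |e_k^T h_k| is at most max |p| over the spectrum times ||h_k|| = ||x_k||.  The
   Chebyshev polynomial rescaled to [lambda_min, lambda_max] makes that maximum at most
   2 ((sqrt kappa - 1)/(sqrt kappa + 1))^(k-1).  The spectral estimate is proved for the
   self-adjoint operator P (A + lambda_k I) P on span {q_1, ..., q_k}, P the orthogonal
   projection, by splitting off one eigenvector at a time. *)

section \<open>Chebyshev polynomials\<close>

fun cheb_poly :: "nat \<Rightarrow> real poly" where
  "cheb_poly 0 = 1"
| "cheb_poly (Suc 0) = [:0, 1:]"
| "cheb_poly (Suc (Suc n)) = [:0, 2:] * cheb_poly (Suc n) - cheb_poly n"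

lemma degree_cheb_poly_le: "degree (cheb_poly n) \<le> n"
proof (induction n rule: cheb_poly.induct)
  case (3 n)
  have "degree ([:0, 2:] * cheb_poly (Suc n)) \<le> Suc (Suc n)"
    using degree_mult_le[of "[:0, 2:]" "cheb_poly (Suc n)"] 3(1) by simp
  moreover have "degree (cheb_poly n) \<le> Suc (Suc n)" using 3(2) by simp
  ultimately show ?case by (simp add: degree_diff_le)
qed simp_all

lemma poly_cheb_poly_cos: "poly (cheb_poly n) (cos t) = cos (real n * t)"
proof (induction n rule: cheb_poly.induct)
  case (3 n)
  have "cos (real (Suc (Suc n)) * t) + cos (real n * t) = 2 * cos t * cos (real (Suc n) * t)"
    using cos_add[of "real (Suc n) * t" t] cos_diff[of "real (Suc n) * t" t]
    by (simp add: algebra_simps)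
  then show ?case using 3 by (simp add: algebra_simps)
qed simp_all

lemma abs_poly_cheb_poly_le_1:
  assumes "\<bar>x\<bar> \<le> 1"
  shows "\<bar>poly (cheb_poly n) x\<bar> \<le> 1"
  using poly_cheb_poly_cos[of n "arccos x"] assms by (simp add: cos_arccos_abs)

lemma poly_cheb_poly_joukowski:
  fixes z :: real
  assumes "z \<noteq> 0"
  shows "poly (cheb_poly n) ((z + inverse z) / 2) = (z ^ n + inverse z ^ n) / 2"
proof (induction n rule: cheb_poly.induct)
  case (3 n)
  have zw: "z * inverse z = 1" using assms by simp
  have "poly (cheb_poly (Suc (Suc n))) ((z + inverse z) / 2)
      = (z + inverse z) * poly (cheb_poly (Suc n)) ((z + inverse z) / 2)
        - poly (cheb_poly n) ((z + inverse z) / 2)"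
    by simp
  also have "\<dots> = (z + inverse z) * ((z ^ Suc n + inverse z ^ Suc n) / 2) - (z ^ n + inverse z ^ n) / 2"
    unfolding 3 ..
  also have "\<dots> = (z ^ Suc (Suc n) + inverse z ^ Suc (Suc n)) / 2
      + ((z * inverse z) * z ^ n + (z * inverse z) * inverse z ^ n - (z ^ n + inverse z ^ n)) / 2"
    by (simp add: algebra_simps add_divide_distrib diff_divide_distrib)
  finally show ?case unfolding zw by simp
qed simp_all

lemma cheb_poly_growth:
  fixes a b :: real
  assumes a_pos: "0 < a" and "a < b"
  shows "((sqrt (b / a) + 1) / (sqrt (b / a) - 1)) ^ m / 2 \<le> poly (cheb_poly m) ((b + a) / (b - a))"
proof -
  define s where "s = sqrt (b / a)"
  define z where "z = (s + 1) / (s - 1)"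
  have "s > 1" using assms by (simp add: s_def)
  then have "z > 0" by (simp add: z_def)
  have "s\<^sup>2 = b / a" using assms by (simp add: s_def)
  then have "(b + a) / (b - a) = (s\<^sup>2 + 1) / (s\<^sup>2 - 1)"
    using assms by (simp add: divide_simps) (auto simp: algebra_simps)
  also have "\<dots> = (z + inverse z) / 2"
    using \<open>s > 1\<close> less_1_mult[of s s] by (simp add: z_def divide_simps power2_eq_square) (simp add: algebra_simps)
  finally have "poly (cheb_poly m) ((b + a) / (b - a)) = (z ^ m + inverse z ^ m) / 2"
    using \<open>z > 0\<close> by (simp only: poly_cheb_poly_joukowski)
  moreover have "z ^ m / 2 \<le> (z ^ m + inverse z ^ m) / 2" using \<open>z > 0\<close> by simp
  ultimately show ?thesis by (simp add: s_def z_def)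
qed

lemma chebyshev_polynomial_bound:
  fixes a b :: real
  assumes a_pos: "0 < a" and "a \<le> b"
  obtains p where "degree p \<le> m" "poly p 0 = 1"
    "\<And>t. t \<in> {a..b} \<Longrightarrow> \<bar>poly p t\<bar> \<le> 2 * ((sqrt (b / a) - 1) / (sqrt (b / a) + 1)) ^ m"
proof (cases "a = b")
  case True
  \<comment> \<open>the bound is then 0 for m > 0, attained by 1 - t/a\<close>
  show ?thesis
  proof (cases m)
    case 0
    with that[of 1] show ?thesis by simp
  next
    case (Suc m')
    with that[of "[:1, - 1 / a:]"] True a_pos show ?thesis by simp
  qed
next
  case False
  with assms have "a < b" by simp
  define s where "s = sqrt (b / a)"
  define C where "C = poly (cheb_poly m) ((b + a) / (b - a))"
  define p where "p = smult (1 / C) (pcompose (cheb_poly m) [:(b + a) / (b - a), - 2 / (b - a):])"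
  have "s > 1" using \<open>a < b\<close> a_pos by (simp add: s_def)
  then have z_pos: "(s + 1) / (s - 1) > 0" by simp
  have C_ge: "((s + 1) / (s - 1)) ^ m / 2 \<le> C"
    unfolding C_def s_def using cheb_poly_growth[OF a_pos \<open>a < b\<close>] .
  then have C_pos: "C > 0" using zero_less_power[OF z_pos, of m] by linarith
  have "1 / C \<le> 1 / (((s + 1) / (s - 1)) ^ m / 2)"
    using C_ge C_pos z_pos by (intro divide_left_mono mult_pos_pos) simp_all
  also have "\<dots> = 2 * ((s - 1) / (s + 1)) ^ m" by (simp add: power_divide)
  finally have inv_C: "1 / C \<le> 2 * ((s - 1) / (s + 1)) ^ m" .
  show ?thesis
  proof (rule that)
    have "degree p \<le> degree (cheb_poly m) * degree [:(b + a) / (b - a), - 2 / (b - a):]"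
      unfolding p_def using degree_smult_le degree_pcompose_le order_trans by blast
    also have "\<dots> \<le> m * 1"
      using degree_cheb_poly_le by (intro mult_le_mono) (simp_all add: degree_pCons_eq_if)
    finally show "degree p \<le> m" by simp
    show "poly p 0 = 1" using C_pos by (simp add: p_def poly_pcompose C_def)
    fix t assume "t \<in> {a..b}"
    then have "\<bar>b + a - 2 * t\<bar> \<le> b - a" by auto
    moreover have "(b + a) / (b - a) - 2 / (b - a) * t = (b + a - 2 * t) / (b - a)"
      by (simp add: diff_divide_distrib)
    ultimately have "\<bar>(b + a) / (b - a) - 2 / (b - a) * t\<bar> \<le> 1"
      using \<open>a < b\<close> by simp
    then have "\<bar>poly (cheb_poly m) ((b + a) / (b - a) - 2 / (b - a) * t)\<bar> \<le> 1"
      by (rule abs_poly_cheb_poly_le_1)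
    then have "\<bar>poly p t\<bar> \<le> 1 / C"
      using C_pos by (simp add: p_def poly_pcompose abs_mult divide_le_eq mult.commute)
    with inv_C show "\<bar>poly p t\<bar> \<le> 2 * ((sqrt (b / a) - 1) / (sqrt (b / a) + 1)) ^ m"
      by (simp add: s_def)
  qed
qed

section \<open>Polynomials in a self-adjoint operator\<close>

lemma linear_coeff_zero_if_quadratic_nonpos:
  fixes B C :: real
  assumes nonpos: "\<And>t. t * B + t\<^sup>2 * C \<le> 0"
  shows "B = 0"
proof -
  define d where "d = \<bar>C\<bar> + 1"
  have "d > 0" "d + C > 0" by (simp_all add: d_def)
  have "(B / d) * B + (B / d)\<^sup>2 * C = B\<^sup>2 * (d + C) / d\<^sup>2"
    using \<open>d > 0\<close> by (simp add: field_simps power2_eq_square)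
  then have "B\<^sup>2 * (d + C) / d\<^sup>2 \<le> 0" using nonpos[of "B / d"] by simp
  then have "B\<^sup>2 \<le> 0" using \<open>d > 0\<close> \<open>d + C > 0\<close> by (simp add: divide_le_0_iff mult_le_0_iff)
  then show ?thesis by simp
qed

lemma rayleigh_maximizer_eigenvector:
  fixes f :: "'a::real_inner \<Rightarrow> 'a"
  assumes lin: "linear f" and adj: "\<And>x y. f x \<bullet> y = x \<bullet> f y"
    and V: "subspace V" and inv: "f ` V \<subseteq> V" and "u \<in> V" and uu: "u \<bullet> u = 1"
    and rayleigh: "\<And>z. z \<in> V \<Longrightarrow> z \<bullet> f z \<le> (u \<bullet> f u) * (z \<bullet> z)"
  shows "f u = (u \<bullet> f u) *\<^sub>R u"
proof -
  define \<mu> where "\<mu> = u \<bullet> f u"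
  define w where "w = f u - \<mu> *\<^sub>R u"
  have "w \<in> V" unfolding w_def using \<open>u \<in> V\<close> inv V by (intro subspace_diff subspace_scale) auto
  \<comment> \<open>the Rayleigh defect along u + t w is nonpositive and vanishes at t = 0\<close>
  have "t * (2 * (w \<bullet> w)) + t\<^sup>2 * (w \<bullet> f w - \<mu> * (w \<bullet> w)) \<le> 0" for t
  proof -
    have "u + t *\<^sub>R w \<in> V" using \<open>u \<in> V\<close> \<open>w \<in> V\<close> V by (intro subspace_add subspace_scale)
    then have "(u + t *\<^sub>R w) \<bullet> f (u + t *\<^sub>R w) \<le> \<mu> * ((u + t *\<^sub>R w) \<bullet> (u + t *\<^sub>R w))"
      unfolding \<mu>_def by (rule rayleigh)
    moreover have "f u = w + \<mu> *\<^sub>R u" by (simp add: w_def)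
    then have "u \<bullet> f w = w \<bullet> w + \<mu> * (u \<bullet> w)" "w \<bullet> f u = w \<bullet> w + \<mu> * (u \<bullet> w)"
      using adj[of u w] by (simp_all add: inner_add_left inner_add_right inner_commute)
    ultimately show ?thesis
      using uu by (simp add: linear_add[OF lin] linear_cmul[OF lin] inner_add_left inner_add_right
          \<mu>_def power2_eq_square algebra_simps inner_commute)
  qed
  then have "2 * (w \<bullet> w) = 0" by (rule linear_coeff_zero_if_quadratic_nonpos)
  then show ?thesis by (simp add: w_def \<mu>_def)
qed

lemma self_adjoint_eigenvector_exists:
  fixes f :: "'a::euclidean_space \<Rightarrow> 'a"
  assumes lin: "linear f" and adj: "\<And>x y. f x \<bullet> y = x \<bullet> f y"
    and V: "subspace V" and inv: "f ` V \<subseteq> V" and nontriv: "V \<noteq> {0}"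
  obtains u \<mu> where "u \<in> V" "norm u = 1" "f u = \<mu> *\<^sub>R u"
proof -
  define K where "K = V \<inter> sphere 0 1"
  have "compact K"
    unfolding K_def by (intro closed_Int_compact closed_subspace V compact_sphere)
  obtain v where "v \<in> V" "v \<noteq> 0" using nontriv subspace_0[OF V] by blast
  then have "(1 / norm v) *\<^sub>R v \<in> K" using V by (simp add: K_def subspace_scale)
  then have "K \<noteq> {}" by blast
  have "continuous_on K (\<lambda>z. z \<bullet> f z)"
    using lin by (intro continuous_intros linear_continuous_on linear_conv_bounded_linear[THEN iffD1])
  from continuous_attains_sup[OF \<open>compact K\<close> \<open>K \<noteq> {}\<close> this]
  obtain u where "u \<in> K" and u_max: "\<And>z. z \<in> K \<Longrightarrow> z \<bullet> f z \<le> u \<bullet> f u" by blast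
  have "u \<in> V" and "norm u = 1" using \<open>u \<in> K\<close> by (auto simp: K_def)
  have "z \<bullet> f z \<le> (u \<bullet> f u) * (z \<bullet> z)" if "z \<in> V" for z
  proof (cases "z = 0")
    case True
    then show ?thesis using linear_0[OF lin] by simp
  next
    case False
    have "(1 / norm z) *\<^sub>R z \<in> K" using that False V by (simp add: K_def subspace_scale)
    from u_max[OF this] have "(z \<bullet> f z) / (norm z)\<^sup>2 \<le> u \<bullet> f u"
      by (simp add: linear_cmul[OF lin] power2_eq_square)
    then show ?thesis using False by (simp add: divide_le_eq dot_square_norm)
  qed
  with rayleigh_maximizer_eigenvector[OF lin adj V inv \<open>u \<in> V\<close>] \<open>norm u = 1\<close>
  have "f u = (u \<bullet> f u) *\<^sub>R u" by (simp add: dot_square_norm)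
  with \<open>u \<in> V\<close> \<open>norm u = 1\<close> that show ?thesis by blast
qed

lemma self_adjoint_eigenvectors_orthogonal:
  assumes adj: "\<And>x y. f x \<bullet> y = x \<bullet> f y"
    and "f u = \<mu> *\<^sub>R u" "f v = \<nu> *\<^sub>R v" "\<mu> \<noteq> \<nu>"
  shows "u \<bullet> v = 0"
proof -
  have "\<mu> * (u \<bullet> v) = \<nu> * (u \<bullet> v)" using adj[of u v] assms(2,3) by simp
  with \<open>\<mu> \<noteq> \<nu>\<close> show ?thesis by simp
qed

lemma finite_eigenvalues_self_adjoint:
  fixes f :: "'a::euclidean_space \<Rightarrow> 'a"
  assumes adj: "\<And>x y. f x \<bullet> y = x \<bullet> f y"
  shows "finite {\<mu>. \<exists>v. v \<noteq> 0 \<and> f v = \<mu> *\<^sub>R v}" (is "finite ?E")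
proof -
  define eigvec where "eigvec \<mu> = (SOME v. v \<noteq> 0 \<and> f v = \<mu> *\<^sub>R v)" for \<mu>
  have eigvec: "eigvec \<mu> \<noteq> 0" "f (eigvec \<mu>) = \<mu> *\<^sub>R eigvec \<mu>" if "\<mu> \<in> ?E" for \<mu>
    using someI_ex[OF that[simplified]] by (simp_all add: eigvec_def)
  have "inj_on eigvec ?E"
  proof (rule inj_onI)
    fix \<mu> \<nu> assume "\<mu> \<in> ?E" "\<nu> \<in> ?E" "eigvec \<mu> = eigvec \<nu>"
    then have "\<mu> *\<^sub>R eigvec \<mu> = \<nu> *\<^sub>R eigvec \<mu>"
      using eigvec(2)[OF \<open>\<mu> \<in> ?E\<close>] eigvec(2)[OF \<open>\<nu> \<in> ?E\<close>] by (simp only:)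
    then show "\<mu> = \<nu>" using eigvec(1)[OF \<open>\<mu> \<in> ?E\<close>] by simp
  qed
  have "pairwise orthogonal (eigvec ` ?E)"
  proof (rule pairwise_imageI)
    fix \<mu> \<nu> assume "\<mu> \<in> ?E" "\<nu> \<in> ?E" "eigvec \<mu> \<noteq> eigvec \<nu>"
    then have "\<mu> \<noteq> \<nu>" by auto
    with self_adjoint_eigenvectors_orthogonal[OF adj eigvec(2)[OF \<open>\<mu> \<in> ?E\<close>] eigvec(2)[OF \<open>\<nu> \<in> ?E\<close>]]
    show "orthogonal (eigvec \<mu>) (eigvec \<nu>)" by (simp add: orthogonal_def)
  qed
  moreover have "0 \<notin> eigvec ` ?E"
  proof
    assume "0 \<in> eigvec ` ?E"
    then obtain \<mu> where "0 = eigvec \<mu>" "\<mu> \<in> ?E" by (rule imageE)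
    with eigvec(1)[OF \<open>\<mu> \<in> ?E\<close>] show False by simp
  qed
  ultimately have "independent (eigvec ` ?E)" by (rule pairwise_orthogonal_independent)
  then have "finite (eigvec ` ?E)" using independent_bound by blast
  then show ?thesis using \<open>inj_on eigvec ?E\<close> by (rule finite_imageD)
qed

lemma self_adjoint_orthogonal_complement_invariant:
  assumes adj: "\<And>x y. f x \<bullet> y = x \<bullet> f y"
    and inv: "f ` V \<subseteq> V" and eig: "f u = \<mu> *\<^sub>R u"
  shows "f ` (V \<inter> {x. u \<bullet> x = 0}) \<subseteq> V \<inter> {x. u \<bullet> x = 0}"
proof (intro subsetI, elim imageE IntE, intro IntI CollectI)
  fix x y assume "y = f x" "x \<in> V" "x \<in> {x. u \<bullet> x = 0}"
  then show "y \<in> V" "u \<bullet> y = 0" using inv adj[of u x] eig by auto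
qed

definition poly_op :: "real poly \<Rightarrow> ('a::real_vector \<Rightarrow> 'a) \<Rightarrow> 'a \<Rightarrow> 'a" where
  "poly_op p f y = (\<Sum>i\<le>degree p. coeff p i *\<^sub>R (f ^^ i) y)"

lemma linear_funpow:
  fixes f :: "'a::real_vector \<Rightarrow> 'a"
  shows "linear f \<Longrightarrow> linear (f ^^ n)"
proof (induction n)
  case (Suc n)
  then show ?case using linear_compose[of "f ^^ n" f] by (simp add: o_def)
qed (simp add: linear_id)

lemma linear_poly_op: "linear f \<Longrightarrow> linear (poly_op p f)"
  unfolding poly_op_def[abs_def]
  by (intro linear_compose_sum ballI linear_compose_scale_right linear_funpow)

lemma funpow_eigenvector:
  assumes "linear f" "f u = \<mu> *\<^sub>R u"
  shows "(f ^^ n) u = (\<mu> ^ n) *\<^sub>R u"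
  by (induction n) (simp_all add: assms linear_cmul)

lemma poly_op_eigenvector:
  assumes "linear f" "f u = \<mu> *\<^sub>R u"
  shows "poly_op p f u = poly p \<mu> *\<^sub>R u"
  by (simp add: poly_op_def funpow_eigenvector[OF assms] scaleR_sum_left poly_altdef)

lemma poly_op_in_subspace:
  assumes "subspace V" "f ` V \<subseteq> V" "y \<in> V"
  shows "poly_op p f y \<in> V"
proof -
  have "(f ^^ i) y \<in> V" for i by (induction i) (use assms in auto)
  then show ?thesis unfolding poly_op_def by (intro subspace_sum subspace_scale assms(1))
qed

lemma norm_add_orthogonal_le:
  fixes a b c d :: "'a::real_inner"
  assumes "orthogonal a b" "orthogonal c d" "norm a \<le> S * norm c" "norm b \<le> S * norm d" "S \<ge> 0"
  shows "norm (a + b) \<le> S * norm (c + d)"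
proof (rule power2_le_imp_le)
  have "(norm (a + b))\<^sup>2 = (norm a)\<^sup>2 + (norm b)\<^sup>2" using assms(1) by (rule norm_add_Pythagorean)
  also have "\<dots> \<le> (S * norm c)\<^sup>2 + (S * norm d)\<^sup>2"
    using assms(3,4) by (intro add_mono power_mono) auto
  also have "\<dots> = S\<^sup>2 * ((norm c)\<^sup>2 + (norm d)\<^sup>2)" by (simp add: power_mult_distrib distrib_left)
  also have "\<dots> = (S * norm (c + d))\<^sup>2" by (simp add: norm_add_Pythagorean[OF assms(2)] power_mult_distrib)
  finally show "(norm (a + b))\<^sup>2 \<le> (S * norm (c + d))\<^sup>2" .
  show "0 \<le> S * norm (c + d)" using assms(5) by simp
qed

lemma norm_poly_op_eigen_split:
  assumes lin: "linear f" and eig: "f u = \<mu> *\<^sub>R u" and "norm u = 1" "u \<bullet> w = 0"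
    and "u \<bullet> poly_op p f w = 0" and "\<bar>poly p \<mu>\<bar> \<le> S" "norm (poly_op p f w) \<le> S * norm w"
  shows "norm (poly_op p f (\<alpha> *\<^sub>R u + w)) \<le> S * norm (\<alpha> *\<^sub>R u + w)"
proof -
  have "poly_op p f (\<alpha> *\<^sub>R u + w) = (\<alpha> * poly p \<mu>) *\<^sub>R u + poly_op p f w"
    unfolding linear_add[OF linear_poly_op[OF lin]] linear_cmul[OF linear_poly_op[OF lin]]
      poly_op_eigenvector[OF lin eig] by simp
  also have "norm \<dots> \<le> S * norm (\<alpha> *\<^sub>R u + w)"
  proof (rule norm_add_orthogonal_le)
    show "orthogonal ((\<alpha> * poly p \<mu>) *\<^sub>R u) (poly_op p f w)" "orthogonal (\<alpha> *\<^sub>R u) w"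
      using assms(4,5) by (simp_all add: orthogonal_def)
    show "norm ((\<alpha> * poly p \<mu>) *\<^sub>R u) \<le> S * norm (\<alpha> *\<^sub>R u)"
      using mult_left_mono[OF \<open>\<bar>poly p \<mu>\<bar> \<le> S\<close> abs_ge_zero[of \<alpha>]] \<open>norm u = 1\<close>
      by (simp add: abs_mult mult.commute)
    show "norm (poly_op p f w) \<le> S * norm w" by fact
    show "S \<ge> 0" using \<open>\<bar>poly p \<mu>\<bar> \<le> S\<close> by linarith
  qed
  finally show ?thesis .
qed

lemma dim_inter_hyperplane_less:
  fixes V :: "'a::euclidean_space set"
  assumes V: "subspace V" and "u \<in> V" "u \<noteq> 0"
  shows "dim (V \<inter> {x. u \<bullet> x = 0}) < dim V"
proof -
  let ?W = "V \<inter> {x. u \<bullet> x = 0}"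
  have W: "subspace ?W" by (intro subspace_inter V subspace_hyperplane)
  have "u \<notin> ?W" using assms(3) by simp
  then have "?W \<subset> V" using assms(2) by blast
  then show ?thesis
    using dim_psubset[of ?W V] by (simp add: span_eq_iff[THEN iffD2, OF V] span_eq_iff[THEN iffD2, OF W])
qed

lemma norm_poly_op_le:
  fixes f :: "'a::euclidean_space \<Rightarrow> 'a"
  assumes lin: "linear f" and adj: "\<And>x y. f x \<bullet> y = x \<bullet> f y"
  shows "subspace V \<Longrightarrow> f ` V \<subseteq> V \<Longrightarrow>
    (\<And>v \<mu>. v \<in> V \<Longrightarrow> v \<noteq> 0 \<Longrightarrow> f v = \<mu> *\<^sub>R v \<Longrightarrow> \<bar>poly p \<mu>\<bar> \<le> S) \<Longrightarrow>
    y \<in> V \<Longrightarrow> norm (poly_op p f y) \<le> S * norm y"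
proof (induction "dim V" arbitrary: V y rule: less_induct)
  case less
  note V = \<open>subspace V\<close> and inv = \<open>f ` V \<subseteq> V\<close> and bound = less.prems(3)
  show ?case
  proof (cases "V = {0}")
    case True
    then show ?thesis using \<open>y \<in> V\<close> linear_0[OF linear_poly_op[OF lin]] by simp
  next
    case False
    then obtain u \<mu> where "u \<in> V" "norm u = 1" and eig: "f u = \<mu> *\<^sub>R u"
      using self_adjoint_eigenvector_exists[OF lin adj V inv] by blast
    define W where "W = V \<inter> {x. u \<bullet> x = 0}"
    have W: "subspace W" unfolding W_def by (intro subspace_inter V subspace_hyperplane)
    have uu: "u \<bullet> u = 1" using \<open>norm u = 1\<close> by (simp add: dot_square_norm)
    then have "dim W < dim V" unfolding W_def using V \<open>u \<in> V\<close> by (intro dim_inter_hyperplane_less) auto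
    have inv_W: "f ` W \<subseteq> W"
      using self_adjoint_orthogonal_complement_invariant[OF adj inv eig] by (simp add: W_def)
    have IH: "norm (poly_op p f w) \<le> S * norm w" if "w \<in> W" for w
    proof (rule less.hyps[OF \<open>dim W < dim V\<close> W inv_W _ that])
      show "\<And>v \<mu>. v \<in> W \<Longrightarrow> v \<noteq> 0 \<Longrightarrow> f v = \<mu> *\<^sub>R v \<Longrightarrow> \<bar>poly p \<mu>\<bar> \<le> S"
        using bound by (auto simp: W_def)
    qed
    have "\<bar>poly p \<mu>\<bar> \<le> S" using bound \<open>u \<in> V\<close> eig uu by fastforce
    define \<alpha> where "\<alpha> = u \<bullet> y"
    define w where "w = y - \<alpha> *\<^sub>R u"
    have "w \<in> V" unfolding w_def using V \<open>u \<in> V\<close> \<open>y \<in> V\<close> by (intro subspace_diff subspace_scale)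
    moreover have "u \<bullet> w = 0" using uu by (simp add: w_def \<alpha>_def inner_diff_right)
    ultimately have "w \<in> W" by (simp add: W_def)
    have "y = \<alpha> *\<^sub>R u + w" by (simp add: w_def)
    moreover have "u \<bullet> poly_op p f w = 0"
      using poly_op_in_subspace[OF W inv_W \<open>w \<in> W\<close>] by (simp add: W_def)
    ultimately show ?thesis
      using norm_poly_op_eigen_split[OF lin eig \<open>norm u = 1\<close> \<open>u \<bullet> w = 0\<close>] IH[OF \<open>w \<in> W\<close>]
        \<open>\<bar>poly p \<mu>\<bar> \<le> S\<close> by blast
  qed
qed

lemma inner_poly_op_eq_const_coeff:
  assumes "\<And>i. 0 < i \<Longrightarrow> i \<le> degree p \<Longrightarrow> u \<bullet> (f ^^ i) y = 0"
  shows "u \<bullet> poly_op p f y = poly p 0 * (u \<bullet> y)"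
proof -
  have "u \<bullet> poly_op p f y = (\<Sum>i\<le>degree p. if i = 0 then coeff p 0 * (u \<bullet> y) else 0)"
    unfolding poly_op_def inner_sum_right using assms by (intro sum.cong) auto
  then show ?thesis by (simp add: poly_0_coeff_0)
qed

section \<open>One step of GLTR\<close>

lemma symmetric_matrix_inner:
  fixes A :: "real^'n^'n"
  assumes "transpose A = A"
  shows "(A *v x) \<bullet> y = x \<bullet> (A *v y)"
  by (metis assms dot_lmul_matrix vector_transpose_matrix)

lemma matrix_vector_mult_krylov:
  assumes "z \<in> krylov A g m"
  shows "A *v z \<in> krylov A g (Suc m)"
proof -
  let ?G = "\<lambda>m. {((\<lambda>v. A *v v) ^^ i) g | i. i < m}"
  have "(\<lambda>v. A *v v) ` ?G m \<subseteq> ?G (Suc m)"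
  proof clarify
    fix i assume "i < m"
    then show "\<exists>j. A *v ((\<lambda>v. A *v v) ^^ i) g = ((\<lambda>v. A *v v) ^^ j) g \<and> j < Suc m"
      by (intro exI[of _ "Suc i"]) simp
  qed
  then have "span ((\<lambda>v. A *v v) ` ?G m) \<subseteq> krylov A g (Suc m)"
    unfolding krylov_def by (rule span_mono)
  moreover have "A *v z \<in> span ((\<lambda>v. A *v v) ` ?G m)"
    using assms unfolding krylov_def linear_span_image[OF matrix_vector_mul_linear] by blast
  ultimately show ?thesis by blast
qed

lemma inner_orthonormal_sum:
  fixes q :: "'i \<Rightarrow> 'a::real_inner"
  assumes "finite I" and orthonormal: "\<forall>i\<in>I. \<forall>j\<in>I. q i \<bullet> q j = (if i = j then 1 else 0)"
    and "i \<in> I"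
  shows "q i \<bullet> (\<Sum>j\<in>I. c j *\<^sub>R q j) = c i"
proof -
  have "q i \<bullet> (\<Sum>j\<in>I. c j *\<^sub>R q j) = (\<Sum>j\<in>I. if i = j then c j else 0)"
    unfolding inner_sum_right using orthonormal \<open>i \<in> I\<close> by (intro sum.cong) auto
  with assms(1,3) show ?thesis by simp
qed

lemma pos_def_k_eigenvalue_pos:
  assumes "pos_def_k k M" "is_eigenvalue_k k M \<mu>"
  shows "\<mu> > 0"
proof -
  obtain v where v: "\<exists>i\<in>{1..k}. v i \<noteq> 0" "\<forall>i\<in>{1..k}. (\<Sum>j=1..k. M i j * v j) = \<mu> * v i"
    using assms(2) unfolding is_eigenvalue_k_def by blast
  have "0 < (\<Sum>i=1..k. \<Sum>j=1..k. v i * M i j * v j)"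
    using assms(1) v(1) unfolding pos_def_k_def by blast
  also have "\<dots> = (\<Sum>i=1..k. v i * (\<Sum>j=1..k. M i j * v j))"
    by (simp add: sum_distrib_left mult.assoc)
  also have "\<dots> = (\<Sum>i=1..k. v i * (\<mu> * v i))"
    using v(2) by (intro sum.cong) auto
  also have "\<dots> = \<mu> * (\<Sum>i=1..k. (v i)\<^sup>2)"
    by (simp add: sum_distrib_left power2_eq_square mult.left_commute)
  finally have "0 < \<mu> * (\<Sum>i=1..k. (v i)\<^sup>2)" .
  moreover have "(\<Sum>i=1..k. (v i)\<^sup>2) \<ge> 0" by (intro sum_nonneg) simp
  ultimately show ?thesis by (simp add: zero_less_mult_iff)
qed

locale gltr_step =
  fixes A :: "real^'n^'n" and g :: "real^'n" and k :: nat and q :: "nat \<Rightarrow> real^'n"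
    and \<beta> lam :: real and h :: "nat \<Rightarrow> real"
  assumes symA: "transpose A = A"
    and g_nz: "g \<noteq> 0"
    and k_pos: "1 \<le> k"
    and q_orth: "\<forall>i\<in>{1..k}. \<forall>j\<in>{1..k}. q i \<bullet> q j = (if i = j then 1 else 0)"
    and q_span: "\<forall>j\<in>{1..k}. span (q ` {1..j}) = krylov A g j"
    and q_1: "q 1 = (1 / norm g) *\<^sub>R g"
    and q_next: "norm (q (k+1)) = 1"
    and beta_nonneg: "\<beta> \<ge> 0"
    and lanczos_rel: "\<forall>j\<in>{1..k}. A *v q j =
          (\<Sum>i=1..k. lanczos_T A q i j *\<^sub>R q i) + (if j = k then \<beta> *\<^sub>R q (k+1) else 0)"
    and kkt_eq: "\<forall>i\<in>{1..k}. (\<Sum>j=1..k. (lanczos_T A q i j + (if i = j then lam else 0)) * h j)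
          = - norm g * (if i = 1 then 1 else 0)"
    and kkt_pd: "pos_def_k k (\<lambda>i j. lanczos_T A q i j + (if i = j then lam else 0))"
begin

abbreviation T_lam :: "nat \<Rightarrow> nat \<Rightarrow> real" where
  "T_lam \<equiv> \<lambda>i j. lanczos_T A q i j + (if i = j then lam else 0)"

definition A_lam :: "real^'n \<Rightarrow> real^'n" where
  "A_lam z = A *v z + lam *\<^sub>R z"

definition proj :: "real^'n \<Rightarrow> real^'n" where
  "proj z = (\<Sum>i=1..k. (q i \<bullet> z) *\<^sub>R q i)"

(* On V, compressed is T_k + lambda I: its matrix in the basis q_1, ..., q_k is T_lam. *)

definition compressed :: "real^'n \<Rightarrow> real^'n" where
  "compressed z = proj (A_lam (proj z))"

definition x :: "real^'n" where
  "x = (\<Sum>i=1..k. h i *\<^sub>R q i)"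

abbreviation V :: "(real^'n) set" where
  "V \<equiv> span (q ` {1..k})"

lemma inner_q_sum: "i \<in> {1..k} \<Longrightarrow> q i \<bullet> (\<Sum>j=1..k. c j *\<^sub>R q j) = c i"
  using inner_orthonormal_sum[OF _ q_orth] by simp

lemma q_unit: "i \<in> {1..k} \<Longrightarrow> norm (q i) = 1"
  using q_orth by (simp add: norm_eq_sqrt_inner)

lemma q_in_V: "i \<in> {1..k} \<Longrightarrow> q i \<in> V"
  by (intro span_base) auto

lemma sum_q_in_V: "(\<Sum>j=1..k. c j *\<^sub>R q j) \<in> V"
  by (intro span_sum span_scale span_base) auto

lemma linear_A_lam: "linear A_lam"
  unfolding A_lam_def[abs_def]
  by (intro linear_compose_add matrix_vector_mul_linear linear_compose_scale_right linear_id[unfolded id_def])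

lemma A_lam_self_adjoint: "A_lam y \<bullet> z = y \<bullet> A_lam z"
  by (simp add: A_lam_def inner_add_left inner_add_right symmetric_matrix_inner[OF symA])

lemma linear_proj: "linear proj"
  by (rule linearI) (simp_all add: proj_def inner_add_right scaleR_add_left sum.distrib scaleR_sum_right)

lemma proj_self_adjoint: "proj y \<bullet> z = y \<bullet> proj z"
  by (simp add: proj_def inner_sum_left inner_sum_right inner_commute mult.commute)

lemma proj_in_V: "proj z \<in> V"
  unfolding proj_def by (rule sum_q_in_V)

lemma proj_eq_self: "z \<in> V \<Longrightarrow> proj z = z"
proof (rule linear_eq_on_span[OF linear_proj linear_id[unfolded id_def]])
  fix y assume "y \<in> q ` {1..k}"
  then obtain j where "j \<in> {1..k}" "y = q j" by blast
  then have "proj y = (\<Sum>i=1..k. if i = j then q i else 0)"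
    unfolding proj_def using q_orth by (intro sum.cong) auto
  then show "proj y = y" using \<open>j \<in> {1..k}\<close> \<open>y = q j\<close> by simp
qed

lemma linear_compressed: "linear compressed"
proof -
  have "compressed = proj \<circ> A_lam \<circ> proj" by (simp add: compressed_def[abs_def] o_def)
  then show ?thesis using linear_proj linear_A_lam by (simp add: linear_compose)
qed

lemma compressed_self_adjoint: "compressed y \<bullet> z = y \<bullet> compressed z"
  by (simp add: compressed_def proj_self_adjoint A_lam_self_adjoint)

lemma compressed_in_V: "compressed z \<in> V"
  unfolding compressed_def by (rule proj_in_V)

lemma compressed_on_V: "z \<in> V \<Longrightarrow> compressed z = proj (A_lam z)"
  by (simp add: compressed_def proj_eq_self)

lemma inner_q_A_lam_sum:
  assumes "i \<in> {1..k}"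
  shows "q i \<bullet> A_lam (\<Sum>j=1..k. c j *\<^sub>R q j) = (\<Sum>j=1..k. T_lam i j * c j)"
proof -
  have "q i \<bullet> A_lam (\<Sum>j=1..k. c j *\<^sub>R q j) = (\<Sum>j=1..k. c j * (q i \<bullet> A_lam (q j)))"
    by (simp add: linear_sum[OF linear_A_lam] linear_cmul[OF linear_A_lam] inner_sum_right)
  also have "\<dots> = (\<Sum>j=1..k. T_lam i j * c j)"
    using q_orth assms by (intro sum.cong) (auto simp: A_lam_def inner_add_right lanczos_T_def)
  finally show ?thesis .
qed

lemma g_eq: "g = norm g *\<^sub>R q 1"
  unfolding q_1 using g_nz by simp

lemma x_in_V: "x \<in> V"
  unfolding x_def by (rule sum_q_in_V)

lemma compressed_x: "compressed x = - g"
proof -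
  have "compressed x = (\<Sum>i=1..k. (q i \<bullet> A_lam x) *\<^sub>R q i)"
    by (simp add: compressed_on_V[OF x_in_V] proj_def)
  also have "\<dots> = (\<Sum>i=1..k. if i = 1 then - norm g *\<^sub>R q i else 0)"
  proof (intro sum.cong refl)
    fix i assume i: "i \<in> {1..k}"
    have "q i \<bullet> A_lam x = (\<Sum>j=1..k. T_lam i j * h j)"
      unfolding x_def by (rule inner_q_A_lam_sum[OF i])
    also have "\<dots> = - norm g * (if i = 1 then 1 else 0)" using kkt_eq i by blast
    finally show "(q i \<bullet> A_lam x) *\<^sub>R q i = (if i = 1 then - norm g *\<^sub>R q i else 0)" by simp
  qed
  also have "\<dots> = - g" using k_pos by (subst g_eq) simp
  finally show ?thesis .
qed

lemma A_lam_q_eq: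
  assumes "j \<in> {1..k}"
  shows "A_lam (q j) - proj (A_lam (q j)) = (if j = k then \<beta> *\<^sub>R q (k+1) else 0)"
proof -
  have "proj (A *v q j) = (\<Sum>i=1..k. lanczos_T A q i j *\<^sub>R q i)"
    by (simp add: proj_def lanczos_T_def)
  moreover have "proj (lam *\<^sub>R q j) = lam *\<^sub>R q j"
    using assms by (intro proj_eq_self span_scale span_base) auto
  ultimately show ?thesis
    using lanczos_rel assms by (simp add: A_lam_def linear_add[OF linear_proj])
qed

lemma residual_eq: "A_lam x + g = (\<beta> * h k) *\<^sub>R q (k+1)"
proof -
  define D where "D z = A_lam z - proj (A_lam z)" for z
  have "linear D"
    unfolding D_def[abs_def] using linear_A_lam linear_proj
    by (intro linear_compose_sub) (simp_all add: linear_compose[unfolded o_def])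
  then have "D x = (\<Sum>j=1..k. h j *\<^sub>R D (q j))"
    by (simp add: x_def linear_sum linear_cmul)
  also have "\<dots> = (\<Sum>j=1..k. if j = k then (\<beta> * h k) *\<^sub>R q (k+1) else 0)"
    using A_lam_q_eq by (intro sum.cong) (auto simp: D_def)
  also have "\<dots> = (\<beta> * h k) *\<^sub>R q (k+1)" using k_pos by simp
  finally have "D x = (\<beta> * h k) *\<^sub>R q (k+1)" .
  moreover have "proj (A_lam x) = - g"
    using compressed_x by (simp add: compressed_on_V[OF x_in_V])
  ultimately show ?thesis by (simp add: D_def)
qed

lemma span_q_mono: "m \<le> m' \<Longrightarrow> span (q ` {1..m}) \<subseteq> span (q ` {1..m'})"
  by (intro span_mono image_mono) auto

lemma A_lam_span_q:
  assumes "1 \<le> m" "m < k" "z \<in> span (q ` {1..m})"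
  shows "A_lam z \<in> span (q ` {1..Suc m})"
proof -
  have "A *v z \<in> krylov A g (Suc m)"
    using assms q_span by (intro matrix_vector_mult_krylov) auto
  then have "A *v z \<in> span (q ` {1..Suc m})" using assms q_span by auto
  moreover have "z \<in> span (q ` {1..Suc m})"
    using assms(3) span_q_mono[of m "Suc m"] by auto
  ultimately show ?thesis unfolding A_lam_def by (intro span_add span_scale)
qed

lemma compressed_funpow_q1:
  "Suc i \<le> k \<Longrightarrow> (compressed ^^ i) (q 1) \<in> span (q ` {1..Suc i})"
proof (induction i)
  case 0
  then show ?case by (auto intro: span_base)
next
  case (Suc i)
  let ?z = "(compressed ^^ i) (q 1)"
  have z: "?z \<in> span (q ` {1..Suc i})" using Suc by simp
  have Az: "A_lam ?z \<in> span (q ` {1..Suc (Suc i)})" using A_lam_span_q[OF _ _ z] Suc.prems by simp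
  have "?z \<in> V" using z span_q_mono[of "Suc i" k] Suc.prems by auto
  moreover have "A_lam ?z \<in> V" using Az span_q_mono[of "Suc (Suc i)" k] Suc.prems by auto
  ultimately have "(compressed ^^ Suc i) (q 1) = A_lam ?z" by (simp add: compressed_on_V proj_eq_self)
  then show ?case using Az by simp
qed

lemma inner_qk_compressed_funpow_x:
  assumes "0 < i" "i < k"
  shows "q k \<bullet> (compressed ^^ i) x = 0"
proof -
  obtain j where "i = Suc j" using assms(1) gr0_implies_Suc by blast
  have "(compressed ^^ i) x = (compressed ^^ j) (compressed x)"
    by (simp add: \<open>i = Suc j\<close> funpow_Suc_right del: funpow.simps)
  also have "\<dots> = - norm g *\<^sub>R (compressed ^^ j) (q 1)"
    using linear_cmul[OF linear_funpow[OF linear_compressed]] compressed_x g_eq by (metis scaleR_minus_left)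
  finally have "(compressed ^^ i) x = - norm g *\<^sub>R (compressed ^^ j) (q 1)" .
  moreover have "orthogonal (q k) ((compressed ^^ j) (q 1))"
  proof (rule orthogonal_to_span[OF compressed_funpow_q1])
    show "Suc j \<le> k" using assms \<open>i = Suc j\<close> by simp
    show "orthogonal (q k) y" if "y \<in> q ` {1..Suc j}" for y
      using that q_orth assms \<open>i = Suc j\<close> by (auto simp: orthogonal_def)
  qed
  ultimately show ?thesis by (simp add: orthogonal_def)
qed

lemma eigenvalue_if_compressed_eigenvector:
  assumes "v \<in> V" "v \<noteq> 0" "compressed v = \<mu> *\<^sub>R v"
  shows "is_eigenvalue_k k T_lam \<mu>"
proof -
  define c where "c j = q j \<bullet> v" for j
  have v_eq: "v = (\<Sum>j=1..k. c j *\<^sub>R q j)"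
    using proj_eq_self[OF assms(1)] by (simp add: proj_def c_def)
  have "\<exists>i\<in>{1..k}. c i \<noteq> 0"
  proof (rule ccontr)
    assume "\<not> ?thesis"
    then have "v = (\<Sum>j=1..k. 0 *\<^sub>R q j)" unfolding v_eq by (intro sum.cong) auto
    with assms(2) show False by simp
  qed
  moreover have "(\<Sum>j=1..k. T_lam i j * c j) = \<mu> * c i" if "i \<in> {1..k}" for i
  proof -
    have "(\<Sum>j=1..k. T_lam i j * c j) = q i \<bullet> A_lam v"
      unfolding v_eq by (rule inner_q_A_lam_sum[OF that, symmetric])
    also have "\<dots> = q i \<bullet> proj (A_lam v)"
      by (simp add: proj_self_adjoint[symmetric] proj_eq_self[OF q_in_V[OF that]])
    also have "\<dots> = \<mu> * c i" using assms(3) by (simp add: compressed_on_V[OF assms(1)] c_def)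
    finally show ?thesis .
  qed
  ultimately show ?thesis unfolding is_eigenvalue_k_def by blast
qed

lemma compressed_eigenvector_if_eigenvalue:
  assumes "is_eigenvalue_k k T_lam \<mu>"
  obtains v where "v \<noteq> 0" "compressed v = \<mu> *\<^sub>R v"
proof -
  obtain c where c: "\<exists>i\<in>{1..k}. c i \<noteq> 0" "\<forall>i\<in>{1..k}. (\<Sum>j=1..k. T_lam i j * c j) = \<mu> * c i"
    using assms unfolding is_eigenvalue_k_def by blast
  define v where "v = (\<Sum>j=1..k. c j *\<^sub>R q j)"
  have "v \<noteq> 0"
  proof
    assume "v = 0"
    then have "c i = 0" if "i \<in> {1..k}" for i using inner_q_sum[OF that, of c] by (simp add: v_def)
    with c(1) show False by blast
  qed
  moreover have "compressed v = \<mu> *\<^sub>R v"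
  proof -
    have "v \<in> V" unfolding v_def by (rule sum_q_in_V)
    then have "compressed v = (\<Sum>i=1..k. (q i \<bullet> A_lam v) *\<^sub>R q i)"
      by (simp add: compressed_on_V proj_def)
    also have "\<dots> = (\<Sum>i=1..k. (\<mu> * c i) *\<^sub>R q i)"
    proof (intro sum.cong refl)
      fix i assume i: "i \<in> {1..k}"
      have "q i \<bullet> A_lam v = (\<Sum>j=1..k. T_lam i j * c j)"
        unfolding v_def by (rule inner_q_A_lam_sum[OF i])
      with c(2) i show "(q i \<bullet> A_lam v) *\<^sub>R q i = (\<mu> * c i) *\<^sub>R q i" by simp
    qed
    finally show ?thesis by (simp add: v_def scaleR_sum_right)
  qed
  ultimately show ?thesis using that by blast
qed

lemma finite_eigenvalues: "finite {\<mu>. is_eigenvalue_k k T_lam \<mu>}"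
proof (rule finite_subset)
  show "{\<mu>. is_eigenvalue_k k T_lam \<mu>} \<subseteq> {\<mu>. \<exists>v. v \<noteq> 0 \<and> compressed v = \<mu> *\<^sub>R v}"
    using compressed_eigenvector_if_eigenvalue by blast
  show "finite {\<mu>. \<exists>v. v \<noteq> 0 \<and> compressed v = \<mu> *\<^sub>R v}"
    by (rule finite_eigenvalues_self_adjoint[OF compressed_self_adjoint])
qed

lemma eigenvalue_exists: "\<exists>\<mu>. is_eigenvalue_k k T_lam \<mu>"
proof -
  have "q 1 \<in> V" using k_pos by (intro q_in_V) simp
  moreover have "q 1 \<noteq> 0" using q_unit[of 1] k_pos by auto
  ultimately have "V \<noteq> {0}" by blast
  then obtain u \<mu> where "u \<in> V" "norm u = 1" "compressed u = \<mu> *\<^sub>R u"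
    using self_adjoint_eigenvector_exists[OF linear_compressed compressed_self_adjoint subspace_span]
      compressed_in_V by blast
  then have "is_eigenvalue_k k T_lam \<mu>"
    by (intro eigenvalue_if_compressed_eigenvector) auto
  then show ?thesis ..
qed

lemma eigenvalue_bounds:
  assumes "is_eigenvalue_k k T_lam \<mu>"
  shows "lam_min_k k T_lam \<le> \<mu>" "\<mu> \<le> lam_max_k k T_lam"
  using assms finite_eigenvalues by (simp_all add: lam_min_k_def lam_max_k_def)

lemma lam_min_pos: "lam_min_k k T_lam > 0"
proof -
  have "lam_min_k k T_lam \<in> {\<mu>. is_eigenvalue_k k T_lam \<mu>}"
    unfolding lam_min_k_def using finite_eigenvalues eigenvalue_exists by (intro Min_in) auto
  then show ?thesis using pos_def_k_eigenvalue_pos[OF kkt_pd] by simp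
qed

lemma lam_min_le_max: "lam_min_k k T_lam \<le> lam_max_k k T_lam"
  using eigenvalue_exists eigenvalue_bounds by (meson order_trans)

lemma abs_last_coeff_le:
  assumes "degree p < k" "poly p 0 = 1"
    and bound: "\<And>t. t \<in> {lam_min_k k T_lam..lam_max_k k T_lam} \<Longrightarrow> \<bar>poly p t\<bar> \<le> S"
  shows "\<bar>h k\<bar> \<le> S * norm x"
proof -
  have "norm (q k) = 1" using q_unit k_pos by simp
  have "h k = q k \<bullet> poly_op p compressed x"
  proof -
    have "q k \<bullet> poly_op p compressed x = poly p 0 * (q k \<bullet> x)"
      using assms(1) inner_qk_compressed_funpow_x by (intro inner_poly_op_eq_const_coeff) simp
    then show ?thesis using assms(2) inner_q_sum[of k h] k_pos by (simp add: x_def)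
  qed
  also have "\<bar>\<dots>\<bar> \<le> norm (poly_op p compressed x)"
    using Cauchy_Schwarz_ineq2[of "q k"] \<open>norm (q k) = 1\<close> by simp
  also have "\<dots> \<le> S * norm x"
  proof (rule norm_poly_op_le[OF linear_compressed compressed_self_adjoint subspace_span _ _ x_in_V])
    show "compressed ` V \<subseteq> V" using compressed_in_V by blast
    show "\<bar>poly p \<mu>\<bar> \<le> S" if "v \<in> V" "v \<noteq> 0" "compressed v = \<mu> *\<^sub>R v" for v \<mu>
      using eigenvalue_bounds[OF eigenvalue_if_compressed_eigenvector[OF that]] bound by simp
  qed
  finally show ?thesis .
qed

lemma residual_bound:
  defines "\<kappa> \<equiv> lam_max_k k T_lam / lam_min_k k T_lam"
  shows "norm (A_lam x + g) \<le> 2 * \<beta> * norm x * ((sqrt \<kappa> - 1) / (sqrt \<kappa> + 1)) ^ (k - 1)"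
proof -
  obtain p where "degree p \<le> k - 1" "poly p 0 = 1"
    and "\<And>t. t \<in> {lam_min_k k T_lam..lam_max_k k T_lam} \<Longrightarrow>
      \<bar>poly p t\<bar> \<le> 2 * ((sqrt \<kappa> - 1) / (sqrt \<kappa> + 1)) ^ (k - 1)"
    using chebyshev_polynomial_bound[OF lam_min_pos lam_min_le_max] unfolding \<kappa>_def by blast
  moreover have "degree p < k" using \<open>degree p \<le> k - 1\<close> k_pos by linarith
  ultimately have "\<bar>h k\<bar> \<le> 2 * ((sqrt \<kappa> - 1) / (sqrt \<kappa> + 1)) ^ (k - 1) * norm x"
    by (intro abs_last_coeff_le)
  then have "\<beta> * \<bar>h k\<bar> \<le> \<beta> * (2 * ((sqrt \<kappa> - 1) / (sqrt \<kappa> + 1)) ^ (k - 1) * norm x)"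
    using beta_nonneg by (rule mult_left_mono)
  then show ?thesis
    using beta_nonneg q_next by (simp add: residual_eq abs_mult mult_ac)
qed

end

theorem theorem3p8:
  fixes A :: "real^'n^'n" and g :: "real^'n" and \<Delta> :: real and k :: nat
    and q :: "nat \<Rightarrow> real^'n" and \<beta> :: real
    and h :: "nat \<Rightarrow> real" and lam :: real
  assumes symA: "transpose A = A"
    and g_nz: "g \<noteq> 0"
    and Delta_pos: "\<Delta> > 0"
    and k_pos: "1 \<le> k"
    \<comment> \<open>Lanczos process: orthonormal q_1..q_k spanning the Krylov spaces, q_1 = g/||g||\<close>
    and q_orth: "\<forall>i\<in>{1..k}. \<forall>j\<in>{1..k}. q i \<bullet> q j = (if i = j then 1 else 0)"
    and q_span: "\<forall>j\<in>{1..k}. span (q ` {1..j}) = krylov A g j"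
    and q_1: "q 1 = (1 / norm g) *\<^sub>R g"
    \<comment> \<open>A Q_k = Q_k T_k + beta_k q_(k+1) e_k^T with unit q_(k+1), beta_k >= 0\<close>
    and q_next: "norm (q (k+1)) = 1"
    and beta_nonneg: "\<beta> \<ge> 0"
    and lanczos_rel: "\<forall>j\<in>{1..k}. A *v q j =
          (\<Sum>i=1..k. lanczos_T A q i j *\<^sub>R q i) + (if j = k then \<beta> *\<^sub>R q (k+1) else 0)"
    \<comment> \<open>h_k minimizes the trust-region subproblem, with multiplier lambda_k\<close>
    and h_feas: "norm_k k h \<le> \<Delta>"
    and h_min: "\<forall>h'. norm_k k h' \<le> \<Delta> \<longrightarrow>
          tr_obj k (lanczos_T A q) (norm g) h \<le> tr_obj k (lanczos_T A q) (norm g) h'"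
    and lam_nonneg: "lam \<ge> 0"
    and kkt_eq: "\<forall>i\<in>{1..k}. (\<Sum>j=1..k. (lanczos_T A q i j + (if i = j then lam else 0)) * h j)
          = - norm g * (if i = 1 then 1 else 0)"
    and kkt_compl: "lam * (\<Delta> - norm_k k h) = 0"
    and kkt_pd: "pos_def_k k (\<lambda>i j. lanczos_T A q i j + (if i = j then lam else 0))"
  shows "let x = (\<Sum>i=1..k. h i *\<^sub>R q i);
             r = A *v x + lam *\<^sub>R x + g;
             M = (\<lambda>i j. lanczos_T A q i j + (if i = j then lam else 0));
             \<kappa> = lam_max_k k M / lam_min_k k M
         in norm r \<le> 2 * \<beta> * norm x * ((sqrt \<kappa> - 1) / (sqrt \<kappa> + 1)) ^ (k - 1)"
proof -
  \<comment> \<open>only stationarity and positive definiteness of the KKT system are needed\<close>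
  interpret gltr_step A g k q \<beta> lam h
    using symA g_nz k_pos q_orth q_span q_1 q_next beta_nonneg lanczos_rel kkt_eq kkt_pd
    by unfold_locales
  show ?thesis
    using residual_bound unfolding Let_def x_def A_lam_def by (simp add: add.assoc)
qed

end
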